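(* Let $G=(U\sqcup V,E)$ be an undirected bipartite graph with parts $U$ and $V$, $|U|=|V|=r\ge 2$. Assume that for any distinct $u,u'\in U$ and any distinct $v,v'\in V$, the number of edges of $G$ with both endpoints in $\{u,u',v,v'\}$ is not equal to $1$. Then for every vertex $x\in U\sqcup V$ with positive degree in the bipartite complement $\overline{G}$, the connected component of $\overline{G}$ containing $x$ is a complete bipartite graph with partition classes $U\cap W$ and $V\cap W$, where $W$ is the vertex set of that component.
   Context: The bipartite complement of a bipartite graph $G=(U\sqcup V,E)$ is $\overline{G}=(U\sqcup V,\overline{E})$ with $\overline{E}=\{\{u,v\}:u\in U,v\in V,\{u,v\}\notin E\}$. *)

theory Defs
  imports Main
begin

text \<open>A bipartite graph with parts U, V is given by a set E of undirected edges,
  each edge being a two-element set {u, v} with u in U and v in V.\<close>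

definition bip_edges :: "'a set \<Rightarrow> 'a set \<Rightarrow> 'a set set" where
  "bip_edges U V = {{u, v} | u v. u \<in> U \<and> v \<in> V}"

definition bip_complement :: "'a set \<Rightarrow> 'a set \<Rightarrow> 'a set set \<Rightarrow> 'a set set" where
  "bip_complement U V E = {{u, v} | u v. u \<in> U \<and> v \<in> V \<and> {u, v} \<notin> E}"

definition adjacent :: "'a set set \<Rightarrow> 'a \<Rightarrow> 'a \<Rightarrow> bool" where
  "adjacent F x y \<longleftrightarrow> {x, y} \<in> F"

definition component :: "'a set set \<Rightarrow> 'a \<Rightarrow> 'a set" where
  "component F x = {y. (adjacent F)\<^sup>*\<^sup>* x y}"

end

theory Submission
  imports Defs
begin

text \<open>A four-vertex set \<open>{u, u', v, v'}\<close> spans exactly one edge of \<open>G\<close> iff it induces a path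
  on four vertices in the complement. So the hypothesis says that in the complement every path
  \<open>a b c d\<close> closes into a 4-cycle. Following a walk from \<open>x\<close>, this shows inductively that every
  vertex reached on the side of \<open>x\<close> has the same neighbourhood as \<open>x\<close>, and every vertex reached
  on the other side is a neighbour of \<open>x\<close>; hence the component is complete bipartite.\<close>

definition path3_closed :: "'a set set \<Rightarrow> bool" where
  "path3_closed F \<longleftrightarrow>
     (\<forall>a b c d. adjacent F a b \<longrightarrow> adjacent F b c \<longrightarrow> adjacent F c d \<longrightarrow> adjacent F a d)"

lemma adjacent_commute: "adjacent F x y \<longleftrightarrow> adjacent F y x"
  by (simp add: adjacent_def insert_commute)

lemma bip_edges_doubleton_iff:
  assumes "U \<inter> V = {}"
  shows "{a, b} \<in> bip_edges U V \<longleftrightarrow> a \<in> U \<and> b \<in> V \<or> a \<in> V \<and> b \<in> U"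
  using assms unfolding bip_edges_def by (auto simp: doubleton_eq_iff)

lemma bip_complement_eq_Diff: "bip_complement U V E = bip_edges U V - E"
  unfolding bip_complement_def bip_edges_def by blast

lemma bip_edgesE:
  assumes "e \<in> bip_edges U V"
  obtains u v where "e = {u, v}" "u \<in> U" "v \<in> V"
  using assms unfolding bip_edges_def by blast

lemma bip_edges_within_four:
  assumes "U \<inter> V = {}" "E \<subseteq> bip_edges U V" "a \<in> U" "c \<in> U" "b \<in> V" "d \<in> V"
  shows "{e \<in> E. e \<subseteq> {a, c, b, d}} = {e \<in> {{a, b}, {a, d}, {c, b}, {c, d}}. e \<in> E}"
proof (intro equalityI subsetI)
  fix e assume e: "e \<in> {e \<in> E. e \<subseteq> {a, c, b, d}}"
  then have "e \<in> bip_edges U V"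
    using assms(2) by blast
  then obtain p q where pq: "e = {p, q}" "p \<in> U" "q \<in> V"
    by (rule bip_edgesE)
  then have "p \<in> {a, c, b, d}" "q \<in> {a, c, b, d}"
    using e by auto
  then have "p \<in> {a, c}" "q \<in> {b, d}"
    using pq assms(1,3-6) by auto
  then show "e \<in> {e \<in> {{a, b}, {a, d}, {c, b}, {c, d}}. e \<in> E}"
    using e pq by auto
next
  fix e assume "e \<in> {e \<in> {{a, b}, {a, d}, {c, b}, {c, d}}. e \<in> E}"
  then show "e \<in> {e \<in> E. e \<subseteq> {a, c, b, d}}"
    by auto
qed

lemma bip_complement_path3_closed:
  assumes disjoint: "U \<inter> V = {}" and E: "E \<subseteq> bip_edges U V"
    and no_single_edge: "\<And>u u' v v'. u \<in> U \<Longrightarrow> u' \<in> U \<Longrightarrow> u \<noteq> u' \<Longrightarrow> v \<in> V \<Longrightarrow> v' \<in> V \<Longrightarrow> v \<noteq> v'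
           \<Longrightarrow> card {e \<in> E. e \<subseteq> {u, u', v, v'}} \<noteq> 1"
  shows "path3_closed (bip_complement U V E)"
proof -
  let ?C = "bip_complement U V E"
  have adj_iff: "adjacent ?C x y \<longleftrightarrow> (x \<in> U \<and> y \<in> V \<or> x \<in> V \<and> y \<in> U) \<and> {x, y} \<notin> E" for x y
    by (simp add: adjacent_def bip_complement_eq_Diff bip_edges_doubleton_iff[OF disjoint])
  have closed_from_U: "adjacent ?C a d"
    if "a \<in> U" "c \<in> U" "b \<in> V" "d \<in> V"
      and "adjacent ?C a b" "adjacent ?C b c" "adjacent ?C c d" for a b c d
  proof (rule ccontr)
    assume not_adj: "\<not> adjacent ?C a d"
    then have "a \<noteq> c" "b \<noteq> d"
      using that by auto
    moreover have "{e \<in> E. e \<subseteq> {a, c, b, d}} = {{a, d}}"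
      using not_adj that unfolding bip_edges_within_four[OF disjoint E that(1-4)] adj_iff
      by (auto simp: insert_commute)
    ultimately show False
      using no_single_edge[of a c b d] that(1-4) by simp
  qed
  show ?thesis
    unfolding path3_closed_def
  proof (intro allI impI)
    fix a b c d
    assume path: "adjacent ?C a b" "adjacent ?C b c" "adjacent ?C c d"
    then consider "a \<in> U" "c \<in> U" "b \<in> V" "d \<in> V" | "a \<in> V" "c \<in> V" "b \<in> U" "d \<in> U"
      using disjoint unfolding adj_iff by blast
    then show "adjacent ?C a d"
    proof cases
      case 1
      then show ?thesis using closed_from_U path by blast
    next
      case 2
      then show ?thesis using closed_from_U[of d b c a] path by (simp add: adjacent_commute)
    qed
  qed
qed

lemma path3_closed_reachable:
  assumes disjoint: "U \<inter> V = {}" and F: "F \<subseteq> bip_edges U V" and closed: "path3_closed F"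
    and reach: "(adjacent F)\<^sup>*\<^sup>* x y"
  shows "if y \<in> U \<longleftrightarrow> x \<in> U then adjacent F y = adjacent F x else adjacent F x y"
  using reach
proof (induction rule: rtranclp_induct)
  case base
  then show ?case by simp
next
  case (step y z)
  have opposite: "z \<in> U \<longleftrightarrow> y \<notin> U"
    using step.hyps(2) F disjoint bip_edges_doubleton_iff[OF disjoint]
    unfolding adjacent_def by blast
  have path3: "adjacent F a d"
    if "adjacent F a b" "adjacent F b c" "adjacent F c d" for a b c d
    using closed that unfolding path3_closed_def by blast
  show ?case
  proof (cases "y \<in> U \<longleftrightarrow> x \<in> U")
    case True
    then have "adjacent F x z"
      using step.hyps(2) step.IH by simp
    then show ?thesis
      using True opposite by simp
  next
    case False
    then have "adjacent F x y"
      using step.IH by simp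
    then have "adjacent F z w \<longleftrightarrow> adjacent F x w" for w
      using path3[of z y x w] path3[of x y z w] step.hyps(2) by (auto simp: adjacent_commute)
    then show ?thesis
      using False opposite by auto
  qed
qed

lemma path3_closed_component_complete_bipartite:
  assumes disjoint: "U \<inter> V = {}" and F: "F \<subseteq> bip_edges U V" and closed: "path3_closed F"
  shows "{e \<in> F. e \<subseteq> component F x} = bip_edges (U \<inter> component F x) (V \<inter> component F x)"
proof (intro equalityI subsetI)
  fix e assume e: "e \<in> {e \<in> F. e \<subseteq> component F x}"
  then have "e \<in> bip_edges U V"
    using F by blast
  then obtain u v where "e = {u, v}" "u \<in> U" "v \<in> V"
    by (rule bip_edgesE)
  with e show "e \<in> bip_edges (U \<inter> component F x) (V \<inter> component F x)"
    unfolding bip_edges_def by auto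
next
  fix e assume "e \<in> bip_edges (U \<inter> component F x) (V \<inter> component F x)"
  then obtain u v where e: "e = {u, v}" and uv: "u \<in> U" "v \<in> V"
    and reach: "(adjacent F)\<^sup>*\<^sup>* x u" "(adjacent F)\<^sup>*\<^sup>* x v"
    unfolding component_def by (rule bip_edgesE) auto
  note reachable = path3_closed_reachable[OF disjoint F closed]
  have "v \<notin> U"
    using uv disjoint by blast
  have "adjacent F u v"
  proof (cases "x \<in> U")
    case True
    then have "adjacent F x v" "adjacent F u = adjacent F x"
      using reachable[OF reach(2)] reachable[OF reach(1)] \<open>u \<in> U\<close> \<open>v \<notin> U\<close> by auto
    then show ?thesis by simp
  next
    case False
    then have "adjacent F x u" "adjacent F v = adjacent F x"
      using reachable[OF reach(1)] reachable[OF reach(2)] \<open>u \<in> U\<close> \<open>v \<notin> U\<close> by auto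
    then show ?thesis by (metis adjacent_commute)
  qed
  then show "e \<in> {e \<in> F. e \<subseteq> component F x}"
    using e reach unfolding adjacent_def component_def by auto
qed

theorem proposition7:
  fixes U V :: "'a set" and E :: "'a set set" and r :: nat
  assumes "finite U" and "finite V" and "U \<inter> V = {}"
    and "card U = r" and "card V = r" and "r \<ge> 2"
    and "E \<subseteq> bip_edges U V"
    and "\<And>u u' v v'. u \<in> U \<Longrightarrow> u' \<in> U \<Longrightarrow> u \<noteq> u' \<Longrightarrow> v \<in> V \<Longrightarrow> v' \<in> V \<Longrightarrow> v \<noteq> v'
           \<Longrightarrow> card {e \<in> E. e \<subseteq> {u, u', v, v'}} \<noteq> 1"
  shows "\<forall>x \<in> U \<union> V. (\<exists>y. {x, y} \<in> bip_complement U V E) \<longrightarrow>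
           (let W = component (bip_complement U V E) x in
             {e \<in> bip_complement U V E. e \<subseteq> W} = bip_edges (U \<inter> W) (V \<inter> W))"
proof -
  have "bip_complement U V E \<subseteq> bip_edges U V"
    by (simp add: bip_complement_eq_Diff)
  moreover have "path3_closed (bip_complement U V E)"
    using bip_complement_path3_closed assms(3,7,8) by blast
  ultimately show ?thesis
    using path3_closed_component_complete_bipartite[OF assms(3)] by (simp add: Let_def)
qed

end
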